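(* Let $m\ge1$, $n\ge1$, let $K\in\{\mathbb{R},\mathbb{C}\}$, and let $\mathcal{Z}$ be either $\mathbb{Z}^m$ or $\{t\in\mathbb{Z}^m\mid t\ge t_1\}$ for some $t_1\in\mathbb{Z}^m$. Let $T=(T^1,\dots,T^m)\in\mathbb{N}^m$, $T\ne0$. Let $A_\alpha\colon\mathcal{Z}\to\mathcal{M}_n(K)$, $\alpha\in\{1,\dots,m\}$, satisfy $$A_\alpha(t+1_\beta)A_\beta(t)=A_\beta(t+1_\alpha)A_\alpha(t),\quad \forall t\in\mathcal{Z},\ \forall\alpha,\beta,$$ and suppose each $A_\alpha$ is periodic of period $T$, i.e. $A_\alpha(t+T)=A_\alpha(t)$ for all $t\in\mathcal{Z}$. Let $C(t)=\chi(t+T,t)$ for $t\in\mathcal{Z}$. Then: (a) for every $\alpha$ and $k\in\mathbb{N}$, $C_{\alpha,k}(t+T)=C_{\alpha,k}(t)$ for all $t\in\mathcal{Z}$; (b) $\chi(t+T,s)=\chi(t,s)\,C(s)$ for all $t,s\in\mathcal{Z}$ with $t\ge s$; (c) for all $s\in\mathcal{Z}$, $$C(s)=\left[\prod_{\alpha=1}^{m-1}C_{\alpha,T^\alpha}(s^1,\dots,s^\alpha,s^{\alpha+1}+T^{\alpha+1},\dots,s^m+T^m)\right]C_{m,T^m}(s^1,\dots,s^m),$$ where the product is ordered with $\alpha=1$ leftmost.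
   Context: $\mathbb{N}=\{0,1,2,\dots\}$; $1_\alpha\in\mathbb{Z}^m$ has $1$ in position $\alpha$ and $0$ elsewhere; $s\le t$ in $\mathbb{Z}^m$ means $s^\alpha\le t^\alpha$ for all $\alpha$. $C_{\alpha,0}(t)=I_n$ and $C_{\alpha,k}(t)=A_\alpha(t+(k-1)1_\alpha)\cdots A_\alpha(t+1_\alpha)A_\alpha(t)$ for $k\ge1$. Under the compatibility relations, for each $s\in\mathcal{Z}$ there is a unique $\chi(\cdot,s)\colon\{t\in\mathcal{Z}\mid t\ge s\}\to\mathcal{M}_n(K)$ with $\chi(s,s)=I_n$ and $\chi(t+1_\alpha,s)=A_\alpha(t)\chi(t,s)$ for all $t\ge s$ and all $\alpha$ (the transition matrix). *)

theory Defs
  imports "HOL-Analysis.Analysis"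
begin

text \<open>Points of Z^m are functions nat => int, supported on the index set {1..m}.
  Matrices in M_n(K) are elements of 'a^'n^'n.\<close>

definition Zm :: "nat \<Rightarrow> (nat \<Rightarrow> int) set" where
  "Zm m = {t. \<forall>i. i \<notin> {1..m} \<longrightarrow> t i = 0}"

definition shift :: "(nat \<Rightarrow> int) \<Rightarrow> nat \<Rightarrow> nat \<Rightarrow> (nat \<Rightarrow> int)" where
  "shift t \<alpha> k = t(\<alpha> := t \<alpha> + int k)"

definition addT :: "(nat \<Rightarrow> int) \<Rightarrow> (nat \<Rightarrow> nat) \<Rightarrow> (nat \<Rightarrow> int)" where
  "addT t T = (\<lambda>i. t i + int (T i))"

fun Cak :: "(nat \<Rightarrow> (nat \<Rightarrow> int) \<Rightarrow> 'a::semiring_1^'n^'n) \<Rightarrow> nat \<Rightarrow> nat \<Rightarrow> (nat \<Rightarrow> int) \<Rightarrow> 'a^'n^'n" where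
  "Cak A \<alpha> 0 t = mat 1"
| "Cak A \<alpha> (Suc k) t = A \<alpha> (shift t \<alpha> k) ** Cak A \<alpha> k t"

text \<open>The transition matrix chi(., s): the unique function on {t in Z. t >= s} with
  chi(s,s) = I and chi(t+1_alpha,s) = A_alpha(t) chi(t,s); to make it a total
  function we set it to 0 outside {t in Z. t >= s}.\<close>
definition chi :: "nat \<Rightarrow> (nat \<Rightarrow> (nat \<Rightarrow> int) \<Rightarrow> 'a::semiring_1^'n^'n) \<Rightarrow> (nat \<Rightarrow> int) set
    \<Rightarrow> (nat \<Rightarrow> int) \<Rightarrow> (nat \<Rightarrow> int) \<Rightarrow> 'a^'n^'n" where
  "chi m A Z t s = (THE f. f s = mat 1
      \<and> (\<forall>u\<in>Z. s \<le> u \<longrightarrow> (\<forall>\<alpha>\<in>{1..m}. f (shift u \<alpha> 1) = A \<alpha> u ** f u))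
      \<and> (\<forall>u. \<not> (u \<in> Z \<and> s \<le> u) \<longrightarrow> f u = 0)) t"

definition ordprod :: "nat \<Rightarrow> (nat \<Rightarrow> 'a::semiring_1^'n^'n) \<Rightarrow> 'a^'n^'n" where
  "ordprod m F = foldr (\<lambda>\<alpha> M. F \<alpha> ** M) [1..<m] (mat 1)"

end

theory Submission
  imports Defs
begin

text \<open>For \<open>s \<le> u\<close> the transition matrix \<open>\<chi>(u, s)\<close> is the product of the blocks \<open>C\<^sub>\<alpha>,\<^sub>k\<close>
  along the staircase path from \<open>s\<close> to \<open>u\<close> that moves first in direction \<open>m\<close>, then in
  direction \<open>m - 1\<close>, and so on down to direction \<open>1\<close>. The compatibility relations let a single
  factor \<open>A\<^sub>\<alpha>\<close> be pushed through every block of this product, so it satisfies the defining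
  recurrence, and uniqueness follows by induction on the lattice distance to \<open>s\<close>. Periodicity
  of the \<open>A\<^sub>\<alpha>\<close> and uniqueness give \<open>\<chi>(t + T, s + T) = \<chi>(t, s)\<close>; combined with the cocycle
  identity this is (b), and evaluating the staircase product at \<open>u = s + T\<close> is (c).\<close>

lemma shift_shift_same: "shift (shift t \<alpha> k) \<alpha> l = shift t \<alpha> (k + l)"
  by (auto simp: shift_def fun_eq_iff)

lemma shift_commute: "shift (shift t \<alpha> k) \<beta> l = shift (shift t \<beta> l) \<alpha> k"
  by (auto simp: shift_def fun_eq_iff)

lemma shift_0 [simp]: "shift t \<alpha> 0 = t"
  by (simp add: shift_def)

lemma le_shift: "t \<le> shift t \<alpha> k"
  by (auto simp: shift_def le_fun_def)

lemma addT_shift: "addT (shift t \<alpha> k) T = shift (addT t T) \<alpha> k"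
  by (auto simp: addT_def shift_def fun_eq_iff)

lemma le_addT: "t \<le> addT t T"
  by (auto simp: addT_def le_fun_def)

lemma addT_mono: "s \<le> t \<Longrightarrow> addT s T \<le> addT t T"
  by (auto simp: addT_def le_fun_def)

lemma Zm_outside: "t \<in> Zm m \<Longrightarrow> i \<notin> {1..m} \<Longrightarrow> t i = 0"
  by (simp add: Zm_def)

lemma foldr_matrix_mul_right:
  "foldr (\<lambda>\<alpha> M. F \<alpha> ** M) xs N = foldr (\<lambda>\<alpha> M. F \<alpha> ** M) xs (mat 1) ** N"
  by (induct xs) (simp_all add: matrix_mul_assoc)

locale commuting_system =
  fixes m :: nat and Z :: "(nat \<Rightarrow> int) set"
    and A :: "nat \<Rightarrow> (nat \<Rightarrow> int) \<Rightarrow> 'a::semiring_1^'n^'n"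
  assumes Z_subset: "Z \<subseteq> Zm m"
    and Z_up_closed: "s \<in> Z \<Longrightarrow> s \<le> t \<Longrightarrow> t \<in> Zm m \<Longrightarrow> t \<in> Z"
    and compatible: "t \<in> Z \<Longrightarrow> \<alpha> \<in> {1..m} \<Longrightarrow> \<beta> \<in> {1..m} \<Longrightarrow>
        A \<alpha> (shift t \<beta> 1) ** A \<beta> t = A \<beta> (shift t \<alpha> 1) ** A \<alpha> t"
begin

lemma Z_outside: "t \<in> Z \<Longrightarrow> i \<notin> {1..m} \<Longrightarrow> t i = 0"
  using Z_subset Zm_outside by blast

lemma shift_in_Z: "t \<in> Z \<Longrightarrow> \<alpha> \<in> {1..m} \<Longrightarrow> shift t \<alpha> k \<in> Z"
  by (rule Z_up_closed[OF _ le_shift]) (use Z_subset in \<open>auto simp: Zm_def shift_def\<close>)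

lemma addT_in_Z: "t \<in> Z \<Longrightarrow> \<forall>i. i \<notin> {1..m} \<longrightarrow> T i = 0 \<Longrightarrow> addT t T \<in> Z"
  by (rule Z_up_closed[OF _ le_addT]) (use Z_subset in \<open>auto simp: Zm_def addT_def\<close>)

lemma upward_induct [consumes 3, case_names base step]:
  assumes "s \<in> Z" "t \<in> Z" "s \<le> t"
    and base: "P s"
    and step: "\<And>u \<alpha>. u \<in> Z \<Longrightarrow> s \<le> u \<Longrightarrow> \<alpha> \<in> {1..m} \<Longrightarrow> P u \<Longrightarrow> P (shift u \<alpha> 1)"
  shows "P t"
  using assms(2,3)
proof (induction "\<Sum>i\<in>{1..m}. nat (t i - s i)" arbitrary: t rule: less_induct)
  case less
  show ?case
  proof (cases "t = s")
    case True
    then show ?thesis using base by simp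
  next
    case False
    then obtain i where "t i \<noteq> s i"
      by (auto simp: fun_eq_iff)
    with less.prems have i: "i \<in> {1..m}" "s i < t i"
      using Z_outside \<open>s \<in> Z\<close> by (metis, auto simp: le_fun_def less_le)
    define t' where "t' = t(i := t i - 1)"
    have "s \<le> t'"
      using less.prems(2) i by (auto simp: le_fun_def t'_def)
    moreover have "t' \<in> Z"
      using Z_up_closed[OF \<open>s \<in> Z\<close> \<open>s \<le> t'\<close>] Z_subset less.prems(1) i
      by (auto simp: Zm_def t'_def)
    moreover have "(\<Sum>j\<in>{1..m}. nat (t' j - s j)) < (\<Sum>j\<in>{1..m}. nat (t j - s j))"
      by (rule sum_strict_mono_ex1) (use i in \<open>auto simp: t'_def\<close>)
    ultimately have "P (shift t' i 1)"
      using less.hyps step i by blast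
    moreover have "shift t' i 1 = t"
      by (auto simp: shift_def t'_def fun_eq_iff)
    ultimately show ?thesis by simp
  qed
qed

lemma A_Cak_commute:
  assumes "t \<in> Z" "\<alpha> \<in> {1..m}" "\<beta> \<in> {1..m}"
  shows "A \<alpha> (shift t \<beta> k) ** Cak A \<beta> k t = Cak A \<beta> k (shift t \<alpha> 1) ** A \<alpha> t"
proof (induction k)
  case 0
  then show ?case by simp
next
  case (Suc k)
  have "A \<alpha> (shift t \<beta> (Suc k)) ** Cak A \<beta> (Suc k) t
      = (A \<alpha> (shift (shift t \<beta> k) \<beta> 1) ** A \<beta> (shift t \<beta> k)) ** Cak A \<beta> k t"
    by (simp add: shift_shift_same matrix_mul_assoc)
  also have "\<dots> = (A \<beta> (shift (shift t \<beta> k) \<alpha> 1) ** A \<alpha> (shift t \<beta> k)) ** Cak A \<beta> k t"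
    using compatible shift_in_Z assms by metis
  also have "\<dots> = A \<beta> (shift (shift t \<alpha> 1) \<beta> k) ** (A \<alpha> (shift t \<beta> k) ** Cak A \<beta> k t)"
    by (simp add: shift_commute matrix_mul_assoc)
  also have "\<dots> = Cak A \<beta> (Suc k) (shift t \<alpha> 1) ** A \<alpha> t"
    using Suc by (simp add: matrix_mul_assoc)
  finally show ?case .
qed

definition corner :: "(nat \<Rightarrow> int) \<Rightarrow> nat \<Rightarrow> (nat \<Rightarrow> int) \<Rightarrow> nat \<Rightarrow> int" where
  "corner s j u = (\<lambda>i. if j \<le> i then u i else s i)"

text \<open>The part of the staircase product from \<open>s\<close> to \<open>u\<close> in the directions \<open>j, \<dots>, m\<close>; the block in
  direction \<open>\<beta>\<close> starts at the corner that agrees with \<open>u\<close> above \<open>\<beta>\<close> and with \<open>s\<close> from \<open>\<beta>\<close> on.\<close>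

definition stair_prod :: "(nat \<Rightarrow> int) \<Rightarrow> nat \<Rightarrow> (nat \<Rightarrow> int) \<Rightarrow> 'a^'n^'n" where
  "stair_prod s j u =
     foldr (\<lambda>\<beta> M. Cak A \<beta> (nat (u \<beta> - s \<beta>)) (corner s (Suc \<beta>) u) ** M) [j..<Suc m] (mat 1)"

lemma corner_in_Z: "s \<in> Z \<Longrightarrow> u \<in> Z \<Longrightarrow> s \<le> u \<Longrightarrow> corner s j u \<in> Z"
  by (rule Z_up_closed[of s]) (use Z_subset in \<open>auto simp: corner_def le_fun_def Zm_def\<close>)

lemma corner_1: "s \<in> Z \<Longrightarrow> u \<in> Z \<Longrightarrow> corner s 1 u = u"
  using Z_outside[of s 0] Z_outside[of u 0] by (auto simp: corner_def fun_eq_iff not_less_eq_eq)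

lemma shift_corner: "s \<le> u \<Longrightarrow> shift (corner s (Suc j) u) j (nat (u j - s j)) = corner s j u"
  by (auto simp: corner_def shift_def fun_eq_iff le_fun_def)

lemma stair_prod_Cons: "j \<le> m \<Longrightarrow>
    stair_prod s j u = Cak A j (nat (u j - s j)) (corner s (Suc j) u) ** stair_prod s (Suc j) u"
  by (simp add: stair_prod_def upt_conv_Cons del: upt_Suc)

lemma stair_prod_self: "stair_prod s j s = mat 1"
proof -
  have idle: "foldr (\<lambda>_ M. M) xs N = N" for xs and N :: "'a^'n^'n"
    by (induction xs) simp_all
  show ?thesis
    by (simp add: stair_prod_def idle del: upt_Suc)
qed

lemma stair_prod_shift_below:
  assumes "\<alpha> < j"
  shows "stair_prod s j (shift u \<alpha> 1) = stair_prod s j u"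
  unfolding stair_prod_def
proof (intro foldr_cong)
  fix \<beta> and M :: "'a^'n^'n"
  assume "\<beta> \<in> set [j..<Suc m]"
  then have "corner s (Suc \<beta>) (shift u \<alpha> 1) = corner s (Suc \<beta>) u" "shift u \<alpha> 1 \<beta> = u \<beta>"
    using assms by (auto simp: corner_def shift_def fun_eq_iff)
  then show "Cak A \<beta> (nat (shift u \<alpha> 1 \<beta> - s \<beta>)) (corner s (Suc \<beta>) (shift u \<alpha> 1)) ** M
      = Cak A \<beta> (nat (u \<beta> - s \<beta>)) (corner s (Suc \<beta>) u) ** M"
    by simp
qed simp_all

lemma stair_prod_shift:
  assumes s: "s \<in> Z" and u: "u \<in> Z" and su: "s \<le> u" and \<alpha>: "\<alpha> \<in> {1..m}"
    and "1 \<le> j" "j \<le> \<alpha>"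
  shows "stair_prod s j (shift u \<alpha> 1) = A \<alpha> (corner s j u) ** stair_prod s j u"
  using \<open>j \<le> \<alpha>\<close> \<open>1 \<le> j\<close>
proof (induction j rule: inc_induct)
  case base
  have "s \<alpha> \<le> u \<alpha>"
    using su by (simp add: le_fun_def)
  then have "nat (shift u \<alpha> 1 \<alpha> - s \<alpha>) = Suc (nat (u \<alpha> - s \<alpha>))"
    by (simp add: shift_def)
  moreover have "corner s (Suc \<alpha>) (shift u \<alpha> 1) = corner s (Suc \<alpha>) u"
    by (auto simp: corner_def shift_def fun_eq_iff)
  ultimately have "stair_prod s \<alpha> (shift u \<alpha> 1)
      = Cak A \<alpha> (Suc (nat (u \<alpha> - s \<alpha>))) (corner s (Suc \<alpha>) u) ** stair_prod s (Suc \<alpha>) u"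
    using \<alpha> stair_prod_Cons[of \<alpha> s "shift u \<alpha> 1"] stair_prod_shift_below[of \<alpha> "Suc \<alpha>" s u]
    by simp
  also have "\<dots> = A \<alpha> (corner s \<alpha> u) ** stair_prod s \<alpha> u"
    using \<alpha> stair_prod_Cons[of \<alpha> s u] shift_corner[OF su] by (simp add: matrix_mul_assoc)
  finally show ?case .
next
  case (step j)
  define p where "p = corner s (Suc j) u"
  have j: "j \<in> {1..m}" "j \<le> m"
    using step \<alpha> by auto
  have "corner s (Suc j) (shift u \<alpha> 1) = shift p \<alpha> 1" "shift u \<alpha> 1 j = u j"
    using step by (auto simp: corner_def shift_def fun_eq_iff p_def)
  then have "stair_prod s j (shift u \<alpha> 1)
      = Cak A j (nat (u j - s j)) (shift p \<alpha> 1) ** (A \<alpha> p ** stair_prod s (Suc j) u)"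
    using stair_prod_Cons[OF j(2), of s "shift u \<alpha> 1"] step.IH by (simp add: p_def)
  also have "\<dots> = (A \<alpha> (shift p j (nat (u j - s j))) ** Cak A j (nat (u j - s j)) p)
                  ** stair_prod s (Suc j) u"
    using A_Cak_commute[OF _ \<alpha> j(1)] corner_in_Z[OF s u su] by (simp add: matrix_mul_assoc p_def)
  also have "\<dots> = A \<alpha> (corner s j u) ** stair_prod s j u"
    using stair_prod_Cons[OF j(2), of s u] shift_corner[OF su] by (simp add: matrix_mul_assoc p_def)
  finally show ?case .
qed

definition is_transition :: "(nat \<Rightarrow> int) \<Rightarrow> ((nat \<Rightarrow> int) \<Rightarrow> 'a^'n^'n) \<Rightarrow> bool" where
  "is_transition s f \<longleftrightarrow> f s = mat 1
      \<and> (\<forall>u\<in>Z. s \<le> u \<longrightarrow> (\<forall>\<alpha>\<in>{1..m}. f (shift u \<alpha> 1) = A \<alpha> u ** f u))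
      \<and> (\<forall>u. \<not> (u \<in> Z \<and> s \<le> u) \<longrightarrow> f u = 0)"

lemma is_transition_stair_prod:
  assumes s: "s \<in> Z"
  shows "is_transition s (\<lambda>u. if u \<in> Z \<and> s \<le> u then stair_prod s 1 u else 0)"
  unfolding is_transition_def
proof (intro conjI ballI impI allI)
  fix u \<alpha> assume u: "u \<in> Z" "s \<le> u" and \<alpha>: "\<alpha> \<in> {1..m}"
  have "shift u \<alpha> 1 \<in> Z" "s \<le> shift u \<alpha> 1"
    using shift_in_Z[OF u(1) \<alpha>] u(2) le_shift order_trans by blast+
  then show "(if shift u \<alpha> 1 \<in> Z \<and> s \<le> shift u \<alpha> 1 then stair_prod s 1 (shift u \<alpha> 1) else 0) =
      A \<alpha> u ** (if u \<in> Z \<and> s \<le> u then stair_prod s 1 u else 0)"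
    using stair_prod_shift[OF s u \<alpha>, of 1] \<alpha> corner_1[OF s u(1)] u by simp
qed (use s in \<open>auto simp: stair_prod_self\<close>)

lemma is_transition_unique:
  assumes s: "s \<in> Z" and f: "is_transition s f" and g: "is_transition s g"
  shows "f = g"
proof
  fix u
  show "f u = g u"
  proof (cases "u \<in> Z \<and> s \<le> u")
    case True
    then have "u \<in> Z" "s \<le> u" by auto
    with s show ?thesis
      by (induction rule: upward_induct) (use f g in \<open>auto simp: is_transition_def\<close>)
  next
    case False
    then show ?thesis using f g by (auto simp: is_transition_def)
  qed
qed

lemma chi_eq_stair_prod:
  assumes s: "s \<in> Z"
  shows "(\<lambda>u. chi m A Z u s) = (\<lambda>u. if u \<in> Z \<and> s \<le> u then stair_prod s 1 u else 0)"
proof -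
  have "(THE f. is_transition s f) = (\<lambda>u. if u \<in> Z \<and> s \<le> u then stair_prod s 1 u else 0)"
    using is_transition_stair_prod[OF s] is_transition_unique[OF s] by blast
  then show ?thesis
    by (simp add: chi_def is_transition_def)
qed

lemma is_transition_chi: "s \<in> Z \<Longrightarrow> is_transition s (\<lambda>u. chi m A Z u s)"
  using chi_eq_stair_prod is_transition_stair_prod by simp

lemma chi_self: "s \<in> Z \<Longrightarrow> chi m A Z s s = mat 1"
  using is_transition_chi by (simp add: is_transition_def)

lemma chi_shift: "s \<in> Z \<Longrightarrow> u \<in> Z \<Longrightarrow> s \<le> u \<Longrightarrow> \<alpha> \<in> {1..m} \<Longrightarrow>
    chi m A Z (shift u \<alpha> 1) s = A \<alpha> u ** chi m A Z u s"
  using is_transition_chi by (simp add: is_transition_def)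

lemma chi_cocycle:
  assumes "s \<in> Z" "r \<in> Z" "u \<in> Z" "s \<le> r" "r \<le> u"
  shows "chi m A Z u s = chi m A Z u r ** chi m A Z r s"
  using \<open>r \<in> Z\<close> \<open>u \<in> Z\<close> \<open>r \<le> u\<close>
proof (induction rule: upward_induct)
  case base
  then show ?case using chi_self assms by simp
next
  case (step u \<alpha>)
  then show ?case
    using chi_shift assms order_trans by (simp add: matrix_mul_assoc)
qed

end

locale periodic_system = commuting_system m Z A
  for m :: nat and Z and A :: "nat \<Rightarrow> (nat \<Rightarrow> int) \<Rightarrow> 'a::semiring_1^'n^'n" +
  fixes T :: "nat \<Rightarrow> nat"
  assumes T_outside: "\<forall>i. i \<notin> {1..m} \<longrightarrow> T i = 0"
    and periodic: "\<alpha> \<in> {1..m} \<Longrightarrow> t \<in> Z \<Longrightarrow> A \<alpha> (addT t T) = A \<alpha> t"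
begin

lemma Cak_periodic:
  assumes "\<alpha> \<in> {1..m}" "t \<in> Z"
  shows "Cak A \<alpha> k (addT t T) = Cak A \<alpha> k t"
  by (induction k) (use assms periodic shift_in_Z in \<open>simp_all add: addT_shift[symmetric]\<close>)

lemma chi_addT_addT:
  assumes "s \<in> Z" "t \<in> Z" "s \<le> t"
  shows "chi m A Z (addT t T) (addT s T) = chi m A Z t s"
  using assms
proof (induction rule: upward_induct)
  case base
  then show ?case using chi_self addT_in_Z T_outside assms by simp
next
  case (step u \<alpha>)
  then show ?case
    using chi_shift[of "addT s T" "addT u T"] chi_shift[of s u] periodic addT_in_Z T_outside
      addT_mono assms by (simp add: addT_shift[symmetric])
qed

lemma chi_addT:
  assumes "s \<in> Z" "t \<in> Z" "s \<le> t"
  shows "chi m A Z (addT t T) s = chi m A Z t s ** chi m A Z (addT s T) s"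
  using chi_cocycle[of s "addT s T" "addT t T"] chi_addT_addT addT_in_Z T_outside
    le_addT addT_mono assms by simp

lemma chi_period_factorization:
  assumes "m \<ge> 1" "s \<in> Z"
  shows "chi m A Z (addT s T) s =
         ordprod m (\<lambda>\<alpha>. Cak A \<alpha> (T \<alpha>) (\<lambda>i. if \<alpha> < i then s i + int (T i) else s i))
         ** Cak A m (T m) s"
proof -
  define F where "F \<alpha> = Cak A \<alpha> (T \<alpha>) (\<lambda>i. if \<alpha> < i then s i + int (T i) else s i)" for \<alpha>
  have "chi m A Z (addT s T) s = stair_prod s 1 (addT s T)"
    using chi_eq_stair_prod[OF \<open>s \<in> Z\<close>] addT_in_Z[OF \<open>s \<in> Z\<close> T_outside] le_addT by meson
  also have "\<dots> = foldr (\<lambda>\<alpha> M. F \<alpha> ** M) ([1..<m] @ [m]) (mat 1)"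
    unfolding stair_prod_def F_def using \<open>m \<ge> 1\<close>
    by (intro foldr_cong) (auto simp: addT_def corner_def Suc_le_eq)
  also have "\<dots> = ordprod m F ** F m"
    unfolding ordprod_def by (simp add: foldr_matrix_mul_right[of F _ "F m"])
  also have "F m = Cak A m (T m) s"
    using Z_outside[OF \<open>s \<in> Z\<close>] T_outside by (auto simp: F_def fun_eq_iff intro!: arg_cong[of _ _ "Cak A m (T m)"])
  finally show ?thesis by (simp add: F_def)
qed

end

theorem proposition2p16:
  fixes m :: nat
    and Z :: "(nat \<Rightarrow> int) set"
    and T :: "nat \<Rightarrow> nat"
    and A :: "nat \<Rightarrow> (nat \<Rightarrow> int) \<Rightarrow> 'a::real_normed_field^'n^'n"
  assumes hm: "m \<ge> 1"
    and hZ: "Z = Zm m \<or> (\<exists>t1\<in>Zm m. Z = {t \<in> Zm m. t1 \<le> t})"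
    and hTsupp: "\<forall>i. i \<notin> {1..m} \<longrightarrow> T i = 0"
    and hT0: "\<exists>i\<in>{1..m}. T i \<noteq> 0"
    and hcompat: "\<forall>t\<in>Z. \<forall>\<alpha>\<in>{1..m}. \<forall>\<beta>\<in>{1..m}.
        A \<alpha> (shift t \<beta> 1) ** A \<beta> t = A \<beta> (shift t \<alpha> 1) ** A \<alpha> t"
    and hper: "\<forall>\<alpha>\<in>{1..m}. \<forall>t\<in>Z. A \<alpha> (addT t T) = A \<alpha> t"
  shows "(\<forall>\<alpha>\<in>{1..m}. \<forall>k. \<forall>t\<in>Z. Cak A \<alpha> k (addT t T) = Cak A \<alpha> k t)
    \<and> (\<forall>t\<in>Z. \<forall>s\<in>Z. s \<le> t \<longrightarrow>
         chi m A Z (addT t T) s = chi m A Z t s ** chi m A Z (addT s T) s)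
    \<and> (\<forall>s\<in>Z. chi m A Z (addT s T) s =
         ordprod m (\<lambda>\<alpha>. Cak A \<alpha> (T \<alpha>) (\<lambda>i. if \<alpha> < i then s i + int (T i) else s i))
         ** Cak A m (T m) s)"
proof -
  interpret periodic_system m Z A T
  proof
    show "Z \<subseteq> Zm m" and "\<And>s t. s \<in> Z \<Longrightarrow> s \<le> t \<Longrightarrow> t \<in> Zm m \<Longrightarrow> t \<in> Z"
      using hZ by (auto intro: order_trans)
  qed (use hcompat hTsupp hper in auto)
  show ?thesis
    using Cak_periodic chi_addT chi_period_factorization[OF hm] by blast
qed

end
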